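(* Let $a,b\in\mathbb{R}^+\cup\{\infty\}$, $n\ge1$, $g\in C^1(\mathbb{R}^n,\mathbb{R}^n)$, and define $F:(-a,b)\times\mathbb{R}^n\to(-a,b)\times\mathbb{R}^n$ by $F(U,X)=(U,\,X+g(X)\,U_+)$, where $U_+=\max(U,0)$. Then there exists an open set $W$ containing $(-a,0]\times\mathbb{R}^n$ such that $F|_W$ is injective. *)

theory Defs
  imports "HOL-Analysis.Analysis"
begin

definition shearF :: "(real^'n \<Rightarrow> real^'n) \<Rightarrow> (real \<times> (real^'n)) \<Rightarrow> (real \<times> (real^'n))" where
  "shearF g = (\<lambda>(u, x). (u, x + max u 0 *\<^sub>R g x))"

end

theory Submission
  imports Defs
begin

(* The shear F(u,x) = (u, x + u_+ g(x)) is the identity for u <= 0, and for u > 0 the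
   equation F(u,x) = F(u,y) says x - y = u (g y - g x).  If g is L-Lipschitz on a set
   containing x and y and u L < 1, this forces x = y.  Since g is C^1, it is Lipschitz on
   every ball B_k = ball 0 k with some constant L_k (bounded derivative on a compact convex
   set), so F is injective on the union of the layers {u < 1/(L_k + 1)} x B_k: two points
   with the same image lie in a common layer because the balls are nested.  Intersecting
   this open union with the strip (-a, b) x R^n gives the required neighbourhood W of
   (-a, 0] x R^n. *)

text \<open>A \<open>C\<^sup>1\<close> map is Lipschitz on every compact convex set: its derivative is bounded
  there by continuity, and the mean value inequality turns that bound into a Lipschitz
  constant.\<close>
lemma C1_lipschitz_on_compact_convex:
  fixes g :: "'a::real_normed_vector \<Rightarrow> 'b::real_normed_vector"
  assumes deriv: "\<And>x. (g has_derivative blinfun_apply (g' x)) (at x)"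
    and cont: "continuous_on UNIV g'"
    and K: "compact K" "convex K"
  obtains L where "L-lipschitz_on K g"
proof -
  have "bounded (g' ` K)"
    using K by (intro compact_imp_bounded compact_continuous_image continuous_on_subset[OF cont]) auto
  then obtain B where "B > 0" and B: "\<And>x. x \<in> K \<Longrightarrow> norm (g' x) \<le> B"
    by (auto simp: bounded_pos)
  have "norm (g x - g y) \<le> B * norm (x - y)" if "x \<in> K" "y \<in> K" for x y
    using K(2) that deriv B
    by (intro differentiable_bound[where f'="\<lambda>x. blinfun_apply (g' x)"])
       (auto intro: has_derivative_at_withinI simp flip: norm_blinfun.rep_eq)
  then have "B-lipschitz_on K g"
    using \<open>B > 0\<close> by (intro lipschitz_onI) (auto simp: dist_norm)
  then show ?thesis by (rule that)
qed

text \<open>A single shear \<open>x \<mapsto> x + t g(x)\<close> is injective on a set where \<open>g\<close> is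
  \<open>L\<close>-Lipschitz, provided \<open>0 \<le> t\<close> and \<open>t L < 1\<close> (it is a perturbation of the identity by
  a contraction).\<close>
lemma shear_injective:
  fixes g :: "'a::real_normed_vector \<Rightarrow> 'a"
  assumes lip: "L-lipschitz_on K g" and "0 \<le> t" "t * L < 1"
    and xy: "x \<in> K" "y \<in> K" and eq: "x + t *\<^sub>R g x = y + t *\<^sub>R g y"
  shows "x = y"
proof -
  have "x - y = t *\<^sub>R (g y - g x)"
    using eq by (simp add: algebra_simps)
  then have "norm (x - y) = t * norm (g y - g x)"
    using \<open>0 \<le> t\<close> by simp
  also have "\<dots> \<le> t * (L * norm (y - x))"
    using lipschitz_on_normD[OF lip xy(2,1)] \<open>0 \<le> t\<close> by (rule mult_left_mono)
  finally have "(1 - t * L) * norm (x - y) \<le> 0"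
    by (simp add: norm_minus_commute algebra_simps)
  with \<open>t * L < 1\<close> show "x = y"
    by (simp add: mult_le_0_iff)
qed

lemma open_ereal_interval:
  fixes a b :: ereal
  shows "open {u::real. a < ereal u \<and> ereal u < b}"
proof -
  have "open (ereal -` ({a<..} \<inter> {..<b}))"
    by (rule open_vimage) (auto intro: continuous_on_ereal continuous_on_id)
  moreover have "ereal -` ({a<..} \<inter> {..<b}) = {u. a < ereal u \<and> ereal u < b}"
    by auto
  ultimately show ?thesis by simp
qed

lemma shearF_inj_on_layers:
  fixes g :: "real^'n \<Rightarrow> real^'n" and K :: "nat \<Rightarrow> (real^'n) set"
  assumes lip: "\<And>k. (L k)-lipschitz_on (K k) g" and nested: "incseq K"
  shows "inj_on (shearF g) (\<Union>k. {..< 1 / (L k + 1)} \<times> K k)"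
proof (rule inj_onI)
  fix p q
  assume "p \<in> (\<Union>k. {..< 1 / (L k + 1)} \<times> K k)" "q \<in> (\<Union>k. {..< 1 / (L k + 1)} \<times> K k)"
  then obtain u x k v y j where pq: "p = (u, x)" "q = (v, y)"
    and x: "x \<in> K k" "u < 1 / (L k + 1)" and y: "y \<in> K j" "v < 1 / (L j + 1)"
    by auto
  assume "shearF g p = shearF g q"
  then have "v = u" and shear_eq: "x + max u 0 *\<^sub>R g x = y + max u 0 *\<^sub>R g y"
    by (auto simp: shearF_def pq)
  text \<open>Both points lie in the larger of the two layers.\<close>
  define m where "m = max k j"
  have "K k \<subseteq> K m" "K j \<subseteq> K m"
    unfolding m_def by (rule incseqD[OF nested], simp)+
  then have "x \<in> K m" "y \<in> K m"
    using x y by auto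
  moreover have "u < 1 / (L m + 1)"
    using x y \<open>v = u\<close> by (simp add: m_def max_def)
  moreover have "0 \<le> L m"
    using lip by (rule lipschitz_on_nonneg)
  ultimately have "max u 0 * L m < 1"
    by (cases "u \<le> 0") (auto simp: field_simps)
  then have "x = y"
    using shear_injective[OF lip max.cobounded2 _ \<open>x \<in> K m\<close> \<open>y \<in> K m\<close> shear_eq] by simp
  with \<open>v = u\<close> pq show "p = q" by simp
qed

theorem lemma6p1:
  fixes a b :: ereal
    and g :: "real^'n \<Rightarrow> real^'n"
    and g' :: "real^'n \<Rightarrow> ((real^'n) \<Rightarrow>\<^sub>L (real^'n))"
  assumes "0 < a" and "0 < b"
    and "\<And>x. (g has_derivative blinfun_apply (g' x)) (at x)"
    and "continuous_on UNIV g'"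
  shows "\<exists>W. open W
    \<and> {(u, x). -a < ereal u \<and> u \<le> 0} \<subseteq> W
    \<and> W \<subseteq> {(u, x). -a < ereal u \<and> ereal u < b}
    \<and> inj_on (shearF g) W"
proof -
  have "\<exists>L. L-lipschitz_on (ball 0 (real k)) g" for k :: nat
    using C1_lipschitz_on_compact_convex[OF assms(3,4) compact_cball convex_cball]
    by (meson ball_subset_cball lipschitz_on_subset)
  then obtain L where lip: "\<And>k. (L k)-lipschitz_on (ball 0 (real k)) g"
    by metis
  have balls_nested: "incseq (\<lambda>k. ball (0::real^'n) (real k))"
    by (auto simp: incseq_def subset_ball)
  define V where "V = (\<Union>k. {..< 1 / (L k + 1)} \<times> ball (0::real^'n) (real k))"
  define W where "W = ({u. -a < ereal u \<and> ereal u < b} \<times> UNIV) \<inter> V"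
  have "open W"
    unfolding W_def V_def
    by (intro open_Int open_Times open_UN open_ereal_interval ballI open_lessThan open_ball) auto
  moreover have "{(u, x). -a < ereal u \<and> u \<le> 0} \<subseteq> W"
  proof clarify
    fix u :: real and x :: "real^'n"
    assume u: "-a < ereal u" "u \<le> 0"
    obtain k :: nat where "norm x < real k"
      using reals_Archimedean2 by blast
    moreover have "u < 1 / (L k + 1)"
      using u(2) lipschitz_on_nonneg[OF lip, of k] by (simp add: add_nonneg_pos order.strict_trans1)
    moreover have "ereal u < b"
    proof -
      have "ereal u \<le> 0"
        using u(2) by (simp add: zero_ereal_def)
      then show ?thesis
        using \<open>0 < b\<close> by (rule order.strict_trans1)
    qed
    ultimately show "(u, x) \<in> W"
      using u unfolding W_def V_def by auto
  qed
  moreover have "W \<subseteq> {(u, x). -a < ereal u \<and> ereal u < b}"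
    unfolding W_def by auto
  moreover have "inj_on (shearF g) V"
    unfolding V_def
    by (rule shearF_inj_on_layers[where K="\<lambda>k. ball 0 (real k)", OF lip balls_nested])
  then have "inj_on (shearF g) W"
    unfolding W_def by (rule inj_on_subset) blast
  ultimately show ?thesis by blast
qed

end
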